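(* In the setting $|H|=1$ of the context (with Assumption 1), the convex relaxation (R1) is exact (its optimal value equals $c^\star$) if the following convex set of $(\boldsymbol{\mu},{\bf x},w_1)\in\mathbb{R}^m\times\mathbb{R}^n\times\mathbb{R}$ is empty: $d_1^*+\sum_{i\in M}\xi_i\mu_i=0$; $c_1+\sum_{i\in M}a_{i1}\mu_i=0$; $(D_{jj}-d_1^* )x_j+c_j+\sum_{i\in M}a_{ij}\mu_i=0$ for $j\in N\setminus\{1\}$; $\xi_iw_1+2\sum_{j\in N}a_{ij}x_j\le b_i$ for $i\in M$; $\sum_{j\in N}x_j^2\le w_1$; $\mu_i\ge 0$ for $i\in M$.
   Context: Let $N=\{1,\dots,n\}$, $M=\{1,\dots,m\}$. Data: reals $D_{jj}$ ($j\in N$), $c_j$, $a_{ij}$, $b_i$, $\xi_i$ ($i\in M$, $j\in N$). The diagonal QCQP (P) is $c^\star=\inf\{\sum_{j}D_{jj}x_j^2+2\sum_jc_jx_j : \xi_i\sum_jx_j^2+2\sum_ja_{ij}x_j\le b_i,\ i\in M\}$, i.e. all constraint Hessians are ${\bf A}^i=\xi_i{\bf I}$. Its Shor relaxation is $v^\star=\inf\{{\bf D}\bullet{\bf X}+2{\bf c}^\top{\bf x} : \xi_i\,\mathrm{trace}({\bf X})+2{\bf a}_i^\top{\bf x}\le b_i\ (i\in M),\ {\bf X}-{\bf x}{\bf x}^\top\succeq{\bf O}\}$ with ${\bf D}=\mathrm{diag}(D_{jj})$. Assumption 1: (P) is feasible; some $\bar{\bf y}\ge0$ has $\sum_i\bar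 y_i\xi_i>0$; the Shor relaxation has a feasible point in the interior of its feasible region. It is assumed that $d_1^*=\min_{j\in N}D_{jj}$ is attained uniquely at $j=1$. The convex relaxation (R1) is: $\min\ d_1^*w_1+\sum_{j\in N}(D_{jj}-d_1^* )x_j^2+2\sum_{j\in N}c_jx_j$ s.t. $\xi_iw_1+2\sum_{j\in N}a_{ij}x_j\le b_i$ ($i\in M$), $\sum_{j\in N}x_j^2\le w_1$; its optimal value equals $v^\star$. *)

theory Defs
  imports "HOL-Analysis.Analysis"
begin

text \<open>Index sets N and M are the finite types 'n and 'm. The data are
  D (diagonal of the objective Hessian), c :: real^'n, a :: real^'n^'m
  (a $ i $ j = a_ij), b, xi :: real^'m. The distinguished index j1 plays
  the role of j = 1.\<close>

definition P_feasible :: "real^'n^'m \<Rightarrow> real^'m \<Rightarrow> real^'m \<Rightarrow> real^'n \<Rightarrow> bool" where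
  "P_feasible a b xi x \<longleftrightarrow>
     (\<forall>i. xi $ i * (\<Sum>j\<in>UNIV. (x $ j)^2) + 2 * (\<Sum>j\<in>UNIV. a $ i $ j * x $ j) \<le> b $ i)"

definition P_obj :: "real^'n \<Rightarrow> real^'n \<Rightarrow> real^'n \<Rightarrow> real" where
  "P_obj D c x = (\<Sum>j\<in>UNIV. D $ j * (x $ j)^2) + 2 * (\<Sum>j\<in>UNIV. c $ j * x $ j)"

definition c_star :: "real^'n \<Rightarrow> real^'n \<Rightarrow> real^'n^'m \<Rightarrow> real^'m \<Rightarrow> real^'m \<Rightarrow> ereal" where
  "c_star D c a b xi = (INF x\<in>{x. P_feasible a b xi x}. ereal (P_obj D c x))"

definition psd :: "real^'n^'n \<Rightarrow> bool" where
  "psd A \<longleftrightarrow> transpose A = A \<and> (\<forall>v. v \<bullet> (A *v v) \<ge> 0)"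

definition Shor_feasible :: "real^'n^'m \<Rightarrow> real^'m \<Rightarrow> real^'m \<Rightarrow> real^'n^'n \<Rightarrow> real^'n \<Rightarrow> bool" where
  "Shor_feasible a b xi X x \<longleftrightarrow>
     transpose X = X \<and>
     (\<forall>i. xi $ i * (\<Sum>j\<in>UNIV. X $ j $ j) + 2 * (\<Sum>j\<in>UNIV. a $ i $ j * x $ j) \<le> b $ i) \<and>
     psd (X - (\<chi> k l. x $ k * x $ l))"

definition Shor_interior_point :: "real^'n^'m \<Rightarrow> real^'m \<Rightarrow> real^'m \<Rightarrow> bool" where
  "Shor_interior_point a b xi \<longleftrightarrow>
     (\<exists>X x e. e > 0 \<and> Shor_feasible a b xi X x \<and>
        (\<forall>Y y. transpose Y = Y \<and> dist (Y, y) (X, x) < e \<longrightarrow> Shor_feasible a b xi Y y))"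

definition assumption1 :: "real^'n^'m \<Rightarrow> real^'m \<Rightarrow> real^'m \<Rightarrow> bool" where
  "assumption1 a b xi \<longleftrightarrow>
     (\<exists>x::real^'n. P_feasible a b xi x) \<and>
     (\<exists>y::real^'m. (\<forall>i. y $ i \<ge> 0) \<and> (\<Sum>i\<in>UNIV. y $ i * xi $ i) > 0) \<and>
     Shor_interior_point a b xi"

text \<open>Relaxation (R1), with d1* = D $ j1; variables (x, w1).\<close>
definition R1_feasible :: "real^'n^'m \<Rightarrow> real^'m \<Rightarrow> real^'m \<Rightarrow> real^'n \<Rightarrow> real \<Rightarrow> bool" where
  "R1_feasible a b xi x w1 \<longleftrightarrow>
     (\<forall>i. xi $ i * w1 + 2 * (\<Sum>j\<in>UNIV. a $ i $ j * x $ j) \<le> b $ i) \<and>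
     (\<Sum>j\<in>UNIV. (x $ j)^2) \<le> w1"

definition R1_obj :: "real^'n \<Rightarrow> real^'n \<Rightarrow> 'n \<Rightarrow> real^'n \<Rightarrow> real \<Rightarrow> real" where
  "R1_obj D c j1 x w1 = D $ j1 * w1 + (\<Sum>j\<in>UNIV. (D $ j - D $ j1) * (x $ j)^2)
      + 2 * (\<Sum>j\<in>UNIV. c $ j * x $ j)"

definition R1_value :: "real^'n \<Rightarrow> real^'n \<Rightarrow> real^'n^'m \<Rightarrow> real^'m \<Rightarrow> real^'m \<Rightarrow> 'n \<Rightarrow> ereal" where
  "R1_value D c a b xi j1 =
     (INF p\<in>{(x, w1). R1_feasible a b xi x w1}. ereal (R1_obj D c j1 (fst p) (snd p)))"

definition certificate_set :: "real^'n \<Rightarrow> real^'n \<Rightarrow> real^'n^'m \<Rightarrow> real^'m \<Rightarrow> real^'m \<Rightarrow> 'n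
     \<Rightarrow> ((real^'m) \<times> (real^'n) \<times> real) set" where
  "certificate_set D c a b xi j1 = {(mu::real^'m, x::real^'n, w1::real).
     D $ j1 + (\<Sum>i\<in>UNIV. xi $ i * mu $ i) = 0 \<and>
     c $ j1 + (\<Sum>i\<in>UNIV. a $ i $ j1 * mu $ i) = 0 \<and>
     (\<forall>j. j \<noteq> j1 \<longrightarrow> (D $ j - D $ j1) * x $ j + c $ j + (\<Sum>i\<in>UNIV. a $ i $ j * mu $ i) = 0) \<and>
     (\<forall>i. xi $ i * w1 + 2 * (\<Sum>j\<in>UNIV. a $ i $ j * x $ j) \<le> b $ i) \<and>
     (\<Sum>j\<in>UNIV. (x $ j)^2) \<le> w1 \<and>
     (\<forall>i. mu $ i \<ge> 0)}"

end

theory Submission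
  imports Defs
begin

text \<open>Weighting the linear constraints of (R1) with the multipliers y of Assumption 1 bounds w
  from above, and w \<ge> |x|^2, so the feasible set of (R1) is compact and the relaxation attains
  its minimum at some (x, w). If |x|^2 = w, then x is feasible for (P) with the same objective
  value, so the relaxation is exact. Otherwise the convex constraint is inactive at (x, w):
  first-order optimality along feasible directions, turned into multipliers by Farkas' lemma,
  yields \<mu> \<ge> 0 with (\<mu>, x, w) in the set assumed to be empty.\<close>

lemma farkas_lemma:
  fixes v :: "'m::finite \<Rightarrow> 'a::euclidean_space" and g :: 'a
  assumes dual: "\<And>h. (\<forall>i. v i \<bullet> h \<le> 0) \<Longrightarrow> g \<bullet> h \<ge> 0"
  shows "\<exists>mu. (\<forall>i. mu i \<ge> 0) \<and> (\<Sum>i\<in>UNIV. mu i *\<^sub>R v i) = -g"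
proof (rule ccontr)
  assume no_mu: "\<not> ?thesis"
  define C where "C = {(\<Sum>i\<in>UNIV. mu i *\<^sub>R v i) | mu. \<forall>i. mu i \<ge> (0::real)}"
  define K where "K = convex_cone hull (range v)"
  have "convex_cone C" unfolding convex_cone_iff
  proof (intro conjI ballI allI impI)
    show "0 \<in> C" unfolding C_def by (intro CollectI exI[of _ "\<lambda>i. 0"]) simp
  next
    fix x y assume "x \<in> C" "y \<in> C"
    then obtain m1 m2 where "x = (\<Sum>i\<in>UNIV. m1 i *\<^sub>R v i)" "\<forall>i. m1 i \<ge> 0"
      "y = (\<Sum>i\<in>UNIV. m2 i *\<^sub>R v i)" "\<forall>i. m2 i \<ge> 0" unfolding C_def by auto
    then show "x + y \<in> C" unfolding C_def
      by (intro CollectI exI[of _ "\<lambda>i. m1 i + m2 i"]) (auto simp: scaleR_add_left sum.distrib)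
  next
    fix x and t :: real assume "x \<in> C" "0 \<le> t"
    then obtain m where "x = (\<Sum>i\<in>UNIV. m i *\<^sub>R v i)" "\<forall>i. m i \<ge> 0" unfolding C_def by auto
    then show "t *\<^sub>R x \<in> C" unfolding C_def using \<open>0 \<le> t\<close>
      by (intro CollectI exI[of _ "\<lambda>i. t * m i"]) (auto simp: scaleR_sum_right)
  qed
  moreover have "v k \<in> C" for k
    unfolding C_def by (intro CollectI exI[of _ "\<lambda>i. if i = k then 1 else 0"])
      (simp add: if_distrib[of "\<lambda>c. c *\<^sub>R _"] cong: if_cong)
  ultimately have "K \<subseteq> C" unfolding K_def by (intro hull_minimal) auto
  moreover have "-g \<notin> C" using no_mu unfolding C_def by auto
  ultimately have "-g \<notin> K" by blast
  then obtain n e where sep: "n \<bullet> (-g) < e" "\<forall>y\<in>K. n \<bullet> y > e"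
    using separating_hyperplane_closed_point[of K "-g"] unfolding K_def
    by (meson convex_convex_cone_hull closed_convex_cone_hull finite finite_imageI)
  have e_neg: "e < 0" using sep(2) convex_cone_hull_contains_0 unfolding K_def by fastforce
  have "n \<bullet> v i \<ge> 0" for i
  proof (rule ccontr)
    assume "\<not> n \<bullet> v i \<ge> 0"
    then have neg: "n \<bullet> v i < 0" by simp
    have "e / (n \<bullet> v i) \<ge> 0" using neg e_neg by (simp add: divide_neg_neg less_imp_le)
    then have "(e / (n \<bullet> v i)) *\<^sub>R v i \<in> K"
      unfolding K_def by (simp add: convex_cone_hull_mul hull_inc)
    moreover have "n \<bullet> ((e / (n \<bullet> v i)) *\<^sub>R v i) = e" using neg by simp
    ultimately show False using sep(2) by fastforce
  qed
  then have "g \<bullet> (-n) \<ge> 0" by (intro dual) (simp add: inner_commute)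
  then show False using sep(1) e_neg by (simp add: inner_commute)
qed

lemma sum_power2_eq_norm_power2: "(\<Sum>j\<in>UNIV. (x $ j)^2) = norm (x::real^'n) ^ 2"
  unfolding power2_norm_eq_inner by (simp add: inner_vec_def power2_eq_square)

lemma le_of_quadratic_le_linear:
  fixes r s p q :: real
  assumes "s > 0" "r \<ge> 0" "s * r^2 \<le> p + q * r"
  shows "r \<le> 1 + (\<bar>p\<bar> + \<bar>q\<bar>) / s"
proof (cases "r \<le> 1")
  case True
  then show ?thesis using assms(1) by (simp add: add_increasing2)
next
  case False
  have "s * r * r \<le> (\<bar>p\<bar> + \<bar>q\<bar>) * r"
  proof -
    have "p + q * r \<le> \<bar>p\<bar> * r + \<bar>q\<bar> * r"
      using False abs_ge_self[of p] abs_ge_self[of q] mult_right_mono[of q "\<bar>q\<bar>" r] assms(2)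
      by (smt (verit) mult_le_cancel_left1)
    then show ?thesis using assms(3) by (simp add: power2_eq_square algebra_simps)
  qed
  then have "s * r \<le> \<bar>p\<bar> + \<bar>q\<bar>" using False by simp
  then have "r \<le> (\<bar>p\<bar> + \<bar>q\<bar>) / s" using assms(1) by (simp add: pos_le_divide_eq mult.commute)
  then show ?thesis by simp
qed

lemma R1_feasible_weighted_constraint:
  assumes "R1_feasible a b xi x w" and "\<forall>i. y $ i \<ge> 0"
  shows "(\<Sum>i\<in>UNIV. y $ i * xi $ i) * w + 2 * ((\<chi> j. \<Sum>i\<in>UNIV. y $ i * a $ i $ j) \<bullet> x)
           \<le> (\<Sum>i\<in>UNIV. y $ i * b $ i)"
proof -
  have "(\<chi> j. \<Sum>i\<in>UNIV. y $ i * a $ i $ j) \<bullet> x = (\<Sum>j\<in>UNIV. \<Sum>i\<in>UNIV. y $ i * a $ i $ j * x $ j)"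
    by (simp add: inner_vec_def sum_distrib_right)
  also have "\<dots> = (\<Sum>i\<in>UNIV. y $ i * (\<Sum>j\<in>UNIV. a $ i $ j * x $ j))"
    by (subst sum.swap) (simp add: sum_distrib_left mult.assoc)
  finally have "(\<Sum>i\<in>UNIV. y $ i * xi $ i) * w + 2 * ((\<chi> j. \<Sum>i\<in>UNIV. y $ i * a $ i $ j) \<bullet> x)
      = (\<Sum>i\<in>UNIV. y $ i * (xi $ i * w + 2 * (\<Sum>j\<in>UNIV. a $ i $ j * x $ j)))"
    by (simp add: distrib_left sum.distrib sum_distrib_left sum_distrib_right mult_ac)
  also have "\<dots> \<le> (\<Sum>i\<in>UNIV. y $ i * b $ i)"
    using assms by (intro sum_mono mult_left_mono) (auto simp: R1_feasible_def)
  finally show ?thesis .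
qed

definition R1_feasible_set :: "real^'n^'m \<Rightarrow> real^'m \<Rightarrow> real^'m \<Rightarrow> ((real^'n) \<times> real) set" where
  "R1_feasible_set a b xi = {(x, w). R1_feasible a b xi x w}"

lemma bounded_R1_feasible_set:
  fixes a :: "real^'n^'m"
  assumes weights: "\<forall>i. y $ i \<ge> 0" and pos: "(\<Sum>i\<in>UNIV. y $ i * xi $ i) > 0"
  shows "bounded (R1_feasible_set a b xi)"
proof -
  define s where "s = (\<Sum>i\<in>UNIV. y $ i * xi $ i)"
  define B where "B = (\<Sum>i\<in>UNIV. y $ i * b $ i)"
  define u :: "real^'n" where "u = (\<chi> j. \<Sum>i\<in>UNIV. y $ i * a $ i $ j)"
  define r where "r = 1 + (\<bar>B\<bar> + \<bar>2 * norm u\<bar>) / s"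
  have s_pos: "s > 0" using pos by (simp add: s_def)
  have "R1_feasible_set a b xi \<subseteq> cball 0 r \<times> {0 .. (\<bar>B\<bar> + 2 * norm u * r) / s}"
  proof (clarsimp simp: R1_feasible_set_def)
    fix x w assume feas: "R1_feasible a b xi x w"
    have sq: "norm x ^ 2 \<le> w" using feas by (simp add: R1_feasible_def sum_power2_eq_norm_power2)
    have "s * w + 2 * (u \<bullet> x) \<le> B"
      using R1_feasible_weighted_constraint[OF feas weights] by (simp add: s_def B_def u_def)
    moreover have "- (norm u * norm x) \<le> u \<bullet> x" using norm_cauchy_schwarz[of "-u" x] by simp
    ultimately have sw: "s * w \<le> B + 2 * norm u * norm x" by linarith
    have "s * norm x ^ 2 \<le> B + 2 * norm u * norm x" using mult_left_mono[OF sq, of s] s_pos sw by linarith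
    then have x_le: "norm x \<le> r" unfolding r_def by (rule le_of_quadratic_le_linear[OF s_pos norm_ge_zero])
    then have "s * w \<le> \<bar>B\<bar> + 2 * norm u * r" using sw by (smt (verit) mult_left_mono norm_ge_zero)
    then show "norm x \<le> r \<and> 0 \<le> w \<and> w \<le> (\<bar>B\<bar> + 2 * norm u * r) / s"
      using x_le sq s_pos by (simp add: pos_le_divide_eq mult.commute order_trans[OF zero_le_power2])
  qed
  then show ?thesis by (rule bounded_subset[rotated]) (intro bounded_Times bounded_cball bounded_closed_interval)
qed

lemma closed_R1_feasible_set: "closed (R1_feasible_set a b xi)"
proof -
  have "R1_feasible_set a b xi =
      (\<Inter>i. {z. xi $ i * snd z + 2 * (\<Sum>j\<in>UNIV. a $ i $ j * fst z $ j) \<le> b $ i})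
      \<inter> {z. (\<Sum>j\<in>UNIV. (fst z $ j)^2) \<le> snd z}"
    by (auto simp: R1_feasible_set_def R1_feasible_def)
  then show ?thesis by (auto intro!: closed_Int closed_INT closed_Collect_le continuous_intros)
qed

lemma P_feasible_iff_R1_feasible: "P_feasible a b xi x \<longleftrightarrow> R1_feasible a b xi x (\<Sum>j\<in>UNIV. (x $ j)^2)"
  by (simp add: P_feasible_def R1_feasible_def)

lemma R1_obj_lift: "R1_obj D c j1 x (\<Sum>j\<in>UNIV. (x $ j)^2) = P_obj D c x"
  by (simp add: R1_obj_def P_obj_def sum_distrib_left algebra_simps sum_subtractf)

lemma R1_minimum_attained:
  assumes "assumption1 a b xi"
  obtains x w where "R1_feasible a b xi x w"
    and "\<And>x' w'. R1_feasible a b xi x' w' \<Longrightarrow> R1_obj D c j1 x w \<le> R1_obj D c j1 x' w'"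
proof -
  obtain x0 y where "P_feasible a b xi x0" "\<forall>i. y $ i \<ge> 0" "(\<Sum>i\<in>UNIV. y $ i * xi $ i) > 0"
    using assms unfolding assumption1_def by auto
  then have "compact (R1_feasible_set a b xi)" "R1_feasible_set a b xi \<noteq> {}"
    using bounded_R1_feasible_set closed_R1_feasible_set
    by (auto simp: compact_eq_bounded_closed R1_feasible_set_def P_feasible_iff_R1_feasible)
  moreover have "continuous_on (R1_feasible_set a b xi) (\<lambda>z. R1_obj D c j1 (fst z) (snd z))"
    unfolding R1_obj_def by (intro continuous_intros)
  ultimately obtain z where "z \<in> R1_feasible_set a b xi"
    "\<forall>z'\<in>R1_feasible_set a b xi. R1_obj D c j1 (fst z) (snd z) \<le> R1_obj D c j1 (fst z') (snd z')"
    using continuous_attains_inf by blast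
  then show ?thesis using that[of "fst z" "snd z"] by (auto simp: R1_feasible_set_def)
qed

lemma R1_value_eq_minimum:
  assumes "R1_feasible a b xi x w"
    and "\<And>x' w'. R1_feasible a b xi x' w' \<Longrightarrow> R1_obj D c j1 x w \<le> R1_obj D c j1 x' w'"
  shows "R1_value D c a b xi j1 = ereal (R1_obj D c j1 x w)"
  unfolding R1_value_def using assms
  by (intro antisym INF_greatest) (force intro: INF_lower2, auto)

lemma R1_value_le_c_star: "R1_value D c a b xi j1 \<le> c_star D c a b xi"
  unfolding R1_value_def c_star_def
proof (rule INF_mono)
  fix x assume "x \<in> {x. P_feasible a b xi x}"
  then show "\<exists>p\<in>{(x, w). R1_feasible a b xi x w}.
      ereal (R1_obj D c j1 (fst p) (snd p)) \<le> ereal (P_obj D c x)"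
    by (intro bexI[of _ "(x, \<Sum>j\<in>UNIV. (x $ j)^2)"]) (simp_all add: P_feasible_iff_R1_feasible R1_obj_lift)
qed

definition R1_constraint_grad :: "real^'n^'m \<Rightarrow> real^'m \<Rightarrow> 'm \<Rightarrow> (real^'n) \<times> real" where
  "R1_constraint_grad a xi i = ((\<chi> j. 2 * a $ i $ j), xi $ i)"

definition R1_obj_grad :: "real^'n \<Rightarrow> real^'n \<Rightarrow> 'n \<Rightarrow> real^'n \<Rightarrow> (real^'n) \<times> real" where
  "R1_obj_grad D c j1 x = ((\<chi> j. 2 * ((D $ j - D $ j1) * x $ j + c $ j)), D $ j1)"

lemma R1_constraint_along_line:
  "xi $ i * (w + t * hw) + 2 * (\<Sum>j\<in>UNIV. a $ i $ j * (x + t *\<^sub>R hx) $ j)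
     = xi $ i * w + 2 * (\<Sum>j\<in>UNIV. a $ i $ j * x $ j) + t * (R1_constraint_grad a xi i \<bullet> (hx, hw))"
  by (simp add: R1_constraint_grad_def inner_prod_def inner_vec_def algebra_simps sum.distrib
      sum_distrib_left)

lemma R1_obj_along_line:
  "R1_obj D c j1 (x + t *\<^sub>R hx) (w + t * hw)
     = R1_obj D c j1 x w + t * (R1_obj_grad D c j1 x \<bullet> (hx, hw))
       + t^2 * (\<Sum>j\<in>UNIV. (D $ j - D $ j1) * (hx $ j)^2)"
  by (simp add: R1_obj_def R1_obj_grad_def inner_prod_def inner_vec_def power2_eq_square
      algebra_simps sum.distrib sum_distrib_left sum_subtractf)

lemma eventually_R1_feasible_along_line:
  assumes feas: "R1_feasible a b xi x w" and slack: "(\<Sum>j\<in>UNIV. (x $ j)^2) < w"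
    and descent: "\<forall>i. R1_constraint_grad a xi i \<bullet> (hx, hw) \<le> 0"
  shows "\<forall>\<^sub>F t in at_right 0. R1_feasible a b xi (x + t *\<^sub>R hx) (w + t * hw)"
proof -
  have "((\<lambda>t. (w + t * hw) - (\<Sum>j\<in>UNIV. ((x + t *\<^sub>R hx) $ j)^2))
          \<longlongrightarrow> w - (\<Sum>j\<in>UNIV. (x $ j)^2)) (at_right 0)"
    by (auto intro!: tendsto_eq_intros)
  then have "\<forall>\<^sub>F t in at_right 0. (\<Sum>j\<in>UNIV. ((x + t *\<^sub>R hx) $ j)^2) < w + t * hw"
    using slack by (auto dest: order_tendstoD(1)[where a = 0] elim: eventually_mono)
  moreover have "\<forall>\<^sub>F t in at_right 0. (0::real) < t" by (simp add: eventually_at_right_less)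
  ultimately show ?thesis
  proof eventually_elim
    case (elim t)
    have "xi $ i * (w + t * hw) + 2 * (\<Sum>j\<in>UNIV. a $ i $ j * (x + t *\<^sub>R hx) $ j) \<le> b $ i" for i
    proof -
      have "xi $ i * w + 2 * (\<Sum>j\<in>UNIV. a $ i $ j * x $ j) \<le> b $ i"
        using feas by (simp add: R1_feasible_def)
      moreover have "t * (R1_constraint_grad a xi i \<bullet> (hx, hw)) \<le> 0"
        using elim(2) descent by (simp add: mult_nonneg_nonpos)
      ultimately show ?thesis unfolding R1_constraint_along_line by linarith
    qed
    then show ?case using elim(1) by (simp add: R1_feasible_def)
  qed
qed

lemma eventually_R1_obj_less_along_line:
  assumes "R1_obj_grad D c j1 x \<bullet> (hx, hw) < 0"
  shows "\<forall>\<^sub>F t in at_right 0. R1_obj D c j1 (x + t *\<^sub>R hx) (w + t * hw) < R1_obj D c j1 x w"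
proof -
  define q where "q = (\<Sum>j\<in>UNIV. (D $ j - D $ j1) * (hx $ j)^2)"
  have "((\<lambda>t. R1_obj_grad D c j1 x \<bullet> (hx, hw) + t * q) \<longlongrightarrow> R1_obj_grad D c j1 x \<bullet> (hx, hw))
          (at_right 0)"
    by (auto intro!: tendsto_eq_intros)
  then have "\<forall>\<^sub>F t in at_right 0. R1_obj_grad D c j1 x \<bullet> (hx, hw) + t * q < 0"
    using assms by (rule order_tendstoD(2))
  moreover have "\<forall>\<^sub>F t in at_right 0. (0::real) < t" by (simp add: eventually_at_right_less)
  ultimately show ?thesis
  proof eventually_elim
    case (elim t)
    then have "t * (R1_obj_grad D c j1 x \<bullet> (hx, hw) + t * q) < 0" by (simp add: mult_pos_neg)
    then show ?case unfolding R1_obj_along_line q_def[symmetric] by (simp add: power2_eq_square algebra_simps)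
  qed
qed

lemma R1_slack_minimizer_first_order:
  assumes feas: "R1_feasible a b xi x w" and slack: "(\<Sum>j\<in>UNIV. (x $ j)^2) < w"
    and min: "\<And>x' w'. R1_feasible a b xi x' w' \<Longrightarrow> R1_obj D c j1 x w \<le> R1_obj D c j1 x' w'"
    and descent: "\<forall>i. R1_constraint_grad a xi i \<bullet> h \<le> 0"
  shows "R1_obj_grad D c j1 x \<bullet> h \<ge> 0"
proof (rule ccontr)
  assume "\<not> R1_obj_grad D c j1 x \<bullet> h \<ge> 0"
  moreover obtain hx hw where h: "h = (hx, hw)" by fastforce
  ultimately have "R1_obj_grad D c j1 x \<bullet> (hx, hw) < 0" "\<forall>i. R1_constraint_grad a xi i \<bullet> (hx, hw) \<le> 0"
    using descent by auto
  then have "\<forall>\<^sub>F t in at_right 0. R1_feasible a b xi (x + t *\<^sub>R hx) (w + t * hw)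
      \<and> R1_obj D c j1 (x + t *\<^sub>R hx) (w + t * hw) < R1_obj D c j1 x w"
    by (intro eventually_conj eventually_R1_feasible_along_line[OF feas slack]
        eventually_R1_obj_less_along_line)
  then obtain t where "R1_feasible a b xi (x + t *\<^sub>R hx) (w + t * hw)"
      "R1_obj D c j1 (x + t *\<^sub>R hx) (w + t * hw) < R1_obj D c j1 x w"
    using eventually_happens'[OF trivial_limit_at_right_real] by blast
  then show False using min by fastforce
qed

lemma certificate_of_R1_slack_minimizer:
  assumes feas: "R1_feasible a b xi x w" and slack: "(\<Sum>j\<in>UNIV. (x $ j)^2) < w"
    and min: "\<And>x' w'. R1_feasible a b xi x' w' \<Longrightarrow> R1_obj D c j1 x w \<le> R1_obj D c j1 x' w'"
  shows "\<exists>mu. (mu, x, w) \<in> certificate_set D c a b xi j1"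
proof -
  obtain mu where mu_nonneg: "\<forall>i. mu i \<ge> 0"
    and kkt: "(\<Sum>i\<in>UNIV. mu i *\<^sub>R R1_constraint_grad a xi i) = - R1_obj_grad D c j1 x"
    using farkas_lemma[of "R1_constraint_grad a xi" "R1_obj_grad D c j1 x"]
      R1_slack_minimizer_first_order[OF feas slack min] by blast
  have kkt_w: "D $ j1 + (\<Sum>i\<in>UNIV. xi $ i * mu i) = 0"
    using arg_cong[OF kkt, of snd]
    by (simp add: snd_sum R1_constraint_grad_def R1_obj_grad_def mult.commute)
  have kkt_x: "(D $ j - D $ j1) * x $ j + c $ j + (\<Sum>i\<in>UNIV. a $ i $ j * mu i) = 0" for j
  proof -
    have "(\<Sum>i\<in>UNIV. mu i * (2 * a $ i $ j)) = - (2 * ((D $ j - D $ j1) * x $ j + c $ j))"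
      using arg_cong[OF kkt, of "\<lambda>v. fst v $ j"] by (simp add: fst_sum R1_constraint_grad_def R1_obj_grad_def)
    moreover have "(\<Sum>i\<in>UNIV. mu i * (2 * a $ i $ j)) = 2 * (\<Sum>i\<in>UNIV. a $ i $ j * mu i)"
      by (simp add: sum_distrib_left mult_ac)
    ultimately show ?thesis by (simp add: algebra_simps)
  qed
  have "((\<chi> i. mu i), x, w) \<in> certificate_set D c a b xi j1"
    using kkt_w kkt_x[of j1] kkt_x mu_nonneg feas by (simp add: certificate_set_def R1_feasible_def)
  then show ?thesis ..
qed

theorem proposition3:
  fixes D c :: "real^'n" and a :: "real^'n^'m" and b xi :: "real^'m" and j1 :: 'n
  assumes "assumption1 a b xi"
    and "\<forall>j. j \<noteq> j1 \<longrightarrow> D $ j1 < D $ j"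
    and "certificate_set D c a b xi j1 = {}"
  shows "R1_value D c a b xi j1 = c_star D c a b xi"
proof -
  obtain x w where feas: "R1_feasible a b xi x w"
    and min: "\<And>x' w'. R1_feasible a b xi x' w' \<Longrightarrow> R1_obj D c j1 x w \<le> R1_obj D c j1 x' w'"
    using R1_minimum_attained[OF assms(1)] by blast
  have R1_min: "R1_value D c a b xi j1 = ereal (R1_obj D c j1 x w)"
    using feas min by (rule R1_value_eq_minimum)
  have tight: "(\<Sum>j\<in>UNIV. (x $ j)^2) = w"
    using certificate_of_R1_slack_minimizer[OF feas _ min] assms(3) feas
    by (force simp: R1_feasible_def)
  then have "P_feasible a b xi x" using feas by (simp add: P_feasible_iff_R1_feasible)
  then have "c_star D c a b xi \<le> ereal (P_obj D c x)" unfolding c_star_def by (rule INF_lower[OF CollectI])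
  also have "\<dots> = R1_value D c a b xi j1" using R1_min tight R1_obj_lift[of D c j1 x] by simp
  finally show ?thesis using R1_value_le_c_star by (rule antisym[rotated])
qed

end
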